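(* Let $\sigma\in\,]-\tfrac52,\tfrac32[$, $\sigma\ne-\tfrac12$. Then, with two-sided constants independent of $(\lambda,\zeta)\in\mathbb{S}\times(\mathbb{Z}^2\setminus\{0\})$: - if $\sigma>-\tfrac12$: $M_\sigma(\lambda,\zeta)\sim\dfrac{\langle\zeta\rangle^{-\sigma}}{\langle\omega\rangle^2}$; - if $\sigma<-\tfrac12$: $M_\sigma(\lambda,\zeta)\sim\dfrac{\langle\zeta\rangle^{-\sigma}}{\langle\omega\rangle^2}\mathbf{1}_{\langle\zeta\rangle\ge\langle\omega\rangle^\kappa}+\dfrac{\langle\omega\rangle^{-\sigma}}{\langle\omega\rangle^{5/2}}\mathbf{1}_{\langle\zeta\rangle\le\langle\omega\rangle^\kappa}$, where $\kappa=\dfrac{2\sigma+1}{2\sigma}$.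
   Context: Fix $a>0$, $\nu>0$, $\alpha\in\mathbb{R}$, $\beta,\gamma>0$, $\Omega=\mathbb{T}^2\times(0,a)$, $\mathbb{T}^2=(\mathbb{R}/2\pi\mathbb{Z})^2$. Let $\mathcal{V}=\mathcal{V}_1\times\mathcal{V}_2$, where $\mathcal{V}_1$ is the closure in $H^1(\Omega)^2$ of smooth $(u,v)$ periodic in $x,y$, vanishing at $z=0,a$, with $\int_0^a(\partial_xu+\partial_yv)dz=0$, and $\mathcal{V}_2$ the closure in $H^1(\Omega)$ of smooth $\theta$ periodic in $x,y$ vanishing at $z=0,a$. For $X=(u,v,\theta),X'=(u',v',\theta')\in\mathcal{V}$ put $(X,X')_{\mathcal{H}}=\int_\Omega(u\bar u'+v\bar v'+\frac\beta\gamma\theta\bar\theta')$, $(X,X')_{\mathcal{V}}=\int_\Omega(\nabla u\cdot\nabla\bar u'+\nabla v\cdot\nabla\bar v'+\frac\beta\gamma\nabla\theta\cdot\nabla\bar\theta')$, $w=-\int_0^z(\partial_xu+\partial_yv)$, $w'=-\int_0^z(\partial_xu'+\partial_yv')$, $B(X,X')=-\int_\Omega\theta\bar w'+\int_\Omega w\bar\theta'$, $C(X,X')=-\int_\Omega v\bar u'+\int_\Omega u\bar v'$, $\langle PX,X'\rangle=\nu(X,X')_{\mathcal{V}}+\beta B(X,X')+\alpha C(X,X')$, and $\mathbb{V}_P=\{\lambda\in\mathbb{C}:\exists X\in\mathcal{V}\setminus\{0\},\ \lambda(X,X')_{\mathcal{H}}+\langle PX,X'\rangle=0\ \forall X'\in\mathcal{V}\}$.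 Let $\mathbb{S}=\{-\delta_2-\mu_1+i\mu_2:(\mu_1,\mu_2)\in\mathbb{R}^2,\ |\mu_2|\ge\mu_1/\delta_1\}$, where $\delta_1>0$ is small enough that $\mathbb{S}\cap\mathbb{V}_P=\emptyset$ and $\delta_2<\min(\frac{\nu\pi^2}{2a^2},\frac\nu2)$. For $\lambda\in\mathbb{S}$, $\zeta\in\mathbb{Z}^2$: $\langle\zeta\rangle=1+|\zeta|$, $\langle\omega\rangle^2=|\lambda|+\langle\zeta\rangle^2$, and $M_\sigma(\lambda,\zeta)=\big(\sum_{k\ge1}\frac{1}{k^2(k^4+\langle\omega\rangle^4)(k^2+\langle\zeta\rangle^2)^\sigma}\big)^{1/2}$ (finite for $\sigma>-\frac52$). $A\sim B$ means there are constants $C_1,C_2>0$ with $C_1B(\lambda,\zeta)\le A(\lambda,\zeta)\le C_2B(\lambda,\zeta)$ for all $(\lambda,\zeta)\in\mathbb{S}\times(\mathbb{Z}^2\setminus\{0\})$. *)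

theory Defs
  imports "HOL-Analysis.Analysis"
begin

definition sectorS :: "real \<Rightarrow> real \<Rightarrow> complex set" where
  "sectorS \<delta>1 \<delta>2 = {Complex (- \<delta>2 - \<mu>1) \<mu>2 | \<mu>1 \<mu>2. \<bar>\<mu>2\<bar> \<ge> \<mu>1 / \<delta>1}"

definition jzeta :: "int \<times> int \<Rightarrow> real" where
  "jzeta \<zeta> = 1 + sqrt (real_of_int (fst \<zeta>)^2 + real_of_int (snd \<zeta>)^2)"

definition jomega :: "complex \<Rightarrow> int \<times> int \<Rightarrow> real" where
  "jomega l \<zeta> = sqrt (cmod l + (jzeta \<zeta>)^2)"

definition Msig :: "real \<Rightarrow> complex \<Rightarrow> int \<times> int \<Rightarrow> real" where
  "Msig \<sigma> l \<zeta> = sqrt (\<Sum>n. 1 / (real (Suc n)^2 * (real (Suc n)^4 + (jomega l \<zeta>)^4)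
        * (real (Suc n)^2 + (jzeta \<zeta>)^2) powr \<sigma>))"

definition comparable_on ::
  "complex set \<Rightarrow> (complex \<Rightarrow> int \<times> int \<Rightarrow> real) \<Rightarrow> (complex \<Rightarrow> int \<times> int \<Rightarrow> real) \<Rightarrow> bool" where
  "comparable_on S A B \<longleftrightarrow> (\<exists>C1 C2. C1 > 0 \<and> C2 > 0 \<and>
     (\<forall>l\<in>S. \<forall>\<zeta>. \<zeta> \<noteq> (0,0) \<longrightarrow> C1 * B l \<zeta> \<le> A l \<zeta> \<and> A l \<zeta> \<le> C2 * B l \<zeta>))"

end

theory Submission
  imports Defs
begin

text \<open>Write \<open>W = \<langle>\<omega>\<rangle>\<close> and \<open>Z = \<langle>\<zeta>\<rangle>\<close>, so \<open>2 \<le> Z \<le> W\<close>. The series defining \<open>M\<^sub>\<sigma>\<^sup>2\<close> is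
  comparable to \<open>Z\<^sup>-\<^sup>2\<^sup>\<sigma> W\<^sup>-\<^sup>4 + W\<^sup>-\<^sup>5\<^sup>-\<^sup>2\<^sup>\<sigma>\<close>: the first term is the contribution of \<open>k = 1\<close>,
  the second that of the block \<open>W \<le> k \<le> 3W\<close>. For the upper bound, the factor
  \<open>(k\<^sup>2 + Z\<^sup>2)\<^sup>-\<^sup>\<sigma>\<close> is split into \<open>Z\<^sup>-\<^sup>2\<^sup>\<sigma>\<close> and \<open>k\<^sup>-\<^sup>2\<^sup>\<sigma>\<close>, and
  \<open>\<Sum>k. k\<^sup>a / (k\<^sup>4 + W\<^sup>4)\<close> with \<open>a = -2\<sigma> - 2\<close> is \<open>O(W\<^sup>-\<^sup>4)\<close> if \<open>a < -1\<close> and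
  \<open>O(W\<^sup>a\<^sup>-\<^sup>3)\<close> if \<open>a > -1\<close>, the case \<open>\<sigma> = -1/2\<close> being the logarithmic borderline.
  Both terms are squares of the terms of the claimed bracket; for \<open>\<sigma> > -1/2\<close> the first one
  always dominates, for \<open>\<sigma> < -1/2\<close> it dominates exactly when \<open>Z \<ge> W\<^sup>\<kappa>\<close>.\<close>

lemma powr_concave_increment:
  fixes q :: real and n :: nat
  assumes "0 < q" and "q < 1"
  shows "q * real (Suc n) powr (q - 1) \<le> real (Suc n) powr q - real n powr q"
proof (cases "n = 0")
  case True
  thus ?thesis using assms by simp
next
  case False
  have "\<exists>z. real n < z \<and> z < real (Suc n) \<and>
     real (Suc n) powr q - real n powr q = (real (Suc n) - real n) * (q * z powr (q - 1))"
    by (rule MVT2) (use False in \<open>auto intro!: has_real_derivative_powr\<close>)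
  then obtain z where z: "real n < z" "z < real (Suc n)"
    "real (Suc n) powr q - real n powr q = q * z powr (q - 1)" by auto
  have "real (Suc n) powr (q - 1) \<le> z powr (q - 1)"
    by (rule powr_mono2') (use z assms in auto)
  thus ?thesis using z(3) assms by (simp add: mult_left_mono)
qed

lemma powr_neg_decrement:
  fixes p :: real and n :: nat
  assumes "0 < p" and "1 \<le> n"
  shows "p * real (Suc n) powr (-p - 1) \<le> real n powr (-p) - real (Suc n) powr (-p)"
proof -
  have "\<exists>z. real n < z \<and> z < real (Suc n) \<and>
     real (Suc n) powr (-p) - real n powr (-p) = (real (Suc n) - real n) * (-p * z powr (-p - 1))"
    by (rule MVT2) (use assms in \<open>auto intro!: derivative_eq_intros simp: powr_diff powr_minus field_simps\<close>)
  then obtain z where z: "real n < z" "z < real (Suc n)"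
    "real (Suc n) powr (-p) - real n powr (-p) = -p * z powr (-p - 1)" by auto
  have "real (Suc n) powr (-p - 1) \<le> z powr (-p - 1)"
    by (rule powr_mono2') (use z assms in auto)
  hence "p * real (Suc n) powr (-p - 1) \<le> p * z powr (-p - 1)"
    using assms by (intro mult_left_mono) auto
  with z(3) show ?thesis by linarith
qed

lemma sum_Suc_powr_bound:
  fixes a :: real
  assumes "-1 < a"
  obtains C where "C > 0"
    "\<And>N::nat. 1 \<le> N \<Longrightarrow> (\<Sum>n<N. real (Suc n) powr a) \<le> C * real N powr (a + 1)"
proof (cases "a < 0")
  case True
  define q where "q = a + 1"
  have q: "0 < q" "q < 1" using assms True by (auto simp: q_def)
  show ?thesis
  proof (rule that[of "1 / q"])
    fix N :: nat
    have "(\<Sum>n<N. real (Suc n) powr a) \<le> (\<Sum>n<N. (real (Suc n) powr q - real n powr q) / q)"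
      using powr_concave_increment[OF q] q by (intro sum_mono) (simp add: q_def field_simps)
    also have "\<dots> = real N powr q / q"
      using sum_lessThan_telescope[of "\<lambda>n. real n powr q" N] q
      by (simp add: sum_divide_distrib[symmetric])
    finally show "(\<Sum>n<N. real (Suc n) powr a) \<le> 1 / q * real N powr (a + 1)"
      by (simp add: q_def)
  qed (use q in simp)
next
  case False
  show ?thesis
  proof (rule that[of 1])
    fix N :: nat assume "1 \<le> N"
    have "(\<Sum>n<N. real (Suc n) powr a) \<le> (\<Sum>n<N. real N powr a)"
      using False by (intro sum_mono powr_mono2) auto
    also have "\<dots> = real N powr (a + 1)" using \<open>1 \<le> N\<close> by (simp add: powr_add)
    finally show "(\<Sum>n<N. real (Suc n) powr a) \<le> 1 * real N powr (a + 1)" by simp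
  qed simp
qed

lemma suminf_Suc_powr_tail_le:
  fixes p :: real and N :: nat
  assumes p: "0 < p" and N: "1 \<le> N"
  shows "summable (\<lambda>n. real (Suc (n + N)) powr (-p - 1))"
    and "(\<Sum>n. real (Suc (n + N)) powr (-p - 1)) \<le> real N powr (-p) / p"
proof -
  define F where "F n = real (n + N) powr (-p) / p" for n
  have "F \<longlonglongrightarrow> 0"
    unfolding F_def using p
    by (intro tendsto_divide_zero tendsto_neg_powr)
      (auto simp: add.commute[of _ "real N"]
        intro!: filterlim_tendsto_add_at_top[OF tendsto_const filterlim_real_sequentially])
  hence telescope: "(\<lambda>n. F n - F (Suc n)) sums F 0"
    using telescope_sums'[of F 0] by simp
  have le: "real (Suc (n + N)) powr (-p - 1) \<le> F n - F (Suc n)" for n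
    using powr_neg_decrement[OF p, of "n + N"] N p by (simp add: F_def field_simps)
  show sum: "summable (\<lambda>n. real (Suc (n + N)) powr (-p - 1))"
    using le by (intro summable_comparison_test'[OF sums_summable[OF telescope]]) auto
  have "(\<Sum>n. real (Suc (n + N)) powr (-p - 1)) \<le> (\<Sum>n. F n - F (Suc n))"
    by (rule suminf_le[OF le sum sums_summable[OF telescope]])
  thus "(\<Sum>n. real (Suc (n + N)) powr (-p - 1)) \<le> real N powr (-p) / p"
    using sums_unique[OF telescope] by (simp add: F_def)
qed

lemma summable_Suc_powr: "r < -1 \<Longrightarrow> summable (\<lambda>n. real (Suc n) powr r)"
  using summable_real_powr_iff[of r] summable_Suc_iff[of "\<lambda>n. real n powr r"] by simp

lemma powr_div_quartic_le:
  fixes k W b :: real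
  assumes k: "1 \<le> k" and W: "0 < W"
  shows "k powr b / (k^4 + W^4) \<le> k powr (b - 4)"
    and "k powr b / (k^4 + W^4) \<le> W powr (-4) * k powr b"
proof -
  have "k powr b / (k^4 + W^4) \<le> k powr b / k^4"
    by (rule divide_left_mono) (use k W in \<open>auto intro!: mult_pos_pos add_pos_pos\<close>)
  also have "\<dots> = k powr (b - 4)" using k by (simp add: powr_diff)
  finally show "k powr b / (k^4 + W^4) \<le> k powr (b - 4)" .
  have "k powr b / (k^4 + W^4) \<le> k powr b / W^4"
    by (rule divide_left_mono) (use k W in \<open>auto intro!: mult_pos_pos add_pos_pos\<close>)
  also have "\<dots> = W powr (-4) * k powr b" using W by (simp add: powr_minus field_simps)
  finally show "k powr b / (k^4 + W^4) \<le> W powr (-4) * k powr b" .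
qed

lemma summable_powr_div_quartic:
  fixes a W :: real
  assumes "a < 3" and "0 < W"
  shows "summable (\<lambda>n. real (Suc n) powr a / (real (Suc n)^4 + W^4))"
  by (rule summable_comparison_test'[OF summable_Suc_powr[of "a - 4"]])
    (use assms powr_div_quartic_le(1)[of _ W a] in auto)

lemma suminf_powr_div_quartic_le_summable:
  fixes a W :: real
  assumes a: "a < -1" and W: "0 < W"
  shows "(\<Sum>n. real (Suc n) powr a / (real (Suc n)^4 + W^4))
    \<le> W powr (-4) * (\<Sum>n. real (Suc n) powr a)"
proof -
  have "(\<Sum>n. real (Suc n) powr a / (real (Suc n)^4 + W^4)) \<le> (\<Sum>n. W powr (-4) * real (Suc n) powr a)"
    using powr_div_quartic_le(2)[of _ W a] W summable_powr_div_quartic[of a W] a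
      summable_mult[OF summable_Suc_powr[OF a]]
    by (intro suminf_le) auto
  also have "\<dots> = W powr (-4) * (\<Sum>n. real (Suc n) powr a)"
    by (rule suminf_mult[OF summable_Suc_powr[OF a]])
  finally show ?thesis .
qed

lemma suminf_powr_div_quartic_tail_le:
  fixes a W :: real and N :: nat
  assumes a: "a < 3" and W: "0 < W" and N: "1 \<le> N"
  shows "(\<Sum>n. real (Suc (n + N)) powr a / (real (Suc (n + N))^4 + W^4)) \<le> real N powr (a - 3) / (3 - a)"
proof -
  have p: "0 < 3 - a" using a by simp
  note tail_bound = suminf_Suc_powr_tail_le[OF p N, simplified]
  have "summable (\<lambda>n. real (Suc (n + N)) powr a / (real (Suc (n + N))^4 + W^4))"
    using summable_iff_shift[of "\<lambda>n. real (Suc n) powr a / (real (Suc n)^4 + W^4)" N]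
      summable_powr_div_quartic[OF a W] by simp
  hence "(\<Sum>n. real (Suc (n + N)) powr a / (real (Suc (n + N))^4 + W^4))
      \<le> (\<Sum>n. real (Suc (n + N)) powr (a - 4))"
    using powr_div_quartic_le(1)[of _ W a] W tail_bound(1) by (intro suminf_le) auto
  thus ?thesis using tail_bound(2) by simp
qed

text \<open>For \<open>a > -1\<close> the sum concentrates near \<open>k \<approx> W\<close>: the terms \<open>k < W\<close> give
  \<open>W\<^sup>-\<^sup>4 \<Sum>k<W. k\<^sup>a \<lesssim> W\<^sup>a\<^sup>-\<^sup>3\<close> and the tail \<open>\<Sum>k\<ge>W. k\<^sup>a\<^sup>-\<^sup>4 \<lesssim> W\<^sup>a\<^sup>-\<^sup>3\<close>.\<close>

lemma suminf_powr_div_quartic_le_powr: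
  fixes a :: real
  assumes a: "-1 < a" "a < 3"
  obtains D where "D > 0"
    "\<And>W. 2 \<le> W \<Longrightarrow> (\<Sum>n. real (Suc n) powr a / (real (Suc n)^4 + W^4)) \<le> D * W powr (a - 3)"
proof -
  obtain C where C: "C > 0"
    "\<And>N::nat. 1 \<le> N \<Longrightarrow> (\<Sum>n<N. real (Suc n) powr a) \<le> C * real N powr (a + 1)"
    using sum_Suc_powr_bound[OF a(1)] by blast
  define D where "D = C + 2 powr (3 - a) / (3 - a)"
  show ?thesis
  proof (rule that[of D])
    show "D > 0" using C a by (simp add: D_def add_pos_nonneg)
    fix W :: real assume W: "2 \<le> W"
    define h where "h n = real (Suc n) powr a / (real (Suc n)^4 + W^4)" for n
    define N where "N = nat \<lfloor>W\<rfloor>"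
    have N: "real N \<le> W" "W / 2 \<le> real N" "1 \<le> N" using W by (simp_all add: N_def; linarith)+
    have "(\<Sum>n<N. h n) \<le> (\<Sum>n<N. W powr (-4) * real (Suc n) powr a)"
      using powr_div_quartic_le(2)[of _ W a] W by (intro sum_mono) (auto simp: h_def)
    also have "\<dots> \<le> W powr (-4) * (C * real N powr (a + 1))"
      using C(2)[OF N(3)] by (simp add: sum_distrib_left[symmetric] mult_left_mono)
    also have "\<dots> \<le> W powr (-4) * (C * W powr (a + 1))"
      using C a N by (intro mult_left_mono powr_mono2) auto
    also have "\<dots> = C * W powr (a - 3)"
      using W by (simp add: powr_add[symmetric])
    finally have head: "(\<Sum>n<N. h n) \<le> C * W powr (a - 3)" .
    have h_summable: "summable h"
      unfolding h_def using summable_powr_div_quartic[OF a(2), of W] W by simp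
    have "(\<Sum>n. h (n + N)) \<le> real N powr (a - 3) / (3 - a)"
      unfolding h_def using suminf_powr_div_quartic_tail_le[OF a(2) _ N(3), of W] W by simp
    also have "real N powr (a - 3) \<le> (W / 2) powr (a - 3)"
      using a N W by (intro powr_mono2') auto
    also have "(W / 2) powr (a - 3) = 2 powr (3 - a) * W powr (a - 3)"
      using W by (simp add: powr_divide powr_minus field_simps powr_add[symmetric])
    finally have tail: "(\<Sum>n. h (n + N)) \<le> 2 powr (3 - a) / (3 - a) * W powr (a - 3)"
      using a by (simp add: divide_right_mono)
    have "suminf h = (\<Sum>n. h (n + N)) + (\<Sum>n<N. h n)"
      by (rule suminf_split_initial_segment[OF h_summable])
    with head tail show "suminf h \<le> D * W powr (a - 3)"
      by (simp add: D_def algebra_simps)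
  qed
qed

definition msum_term :: "real \<Rightarrow> real \<Rightarrow> real \<Rightarrow> nat \<Rightarrow> real" where
  "msum_term \<sigma> W Z n =
     1 / (real (Suc n)^2 * (real (Suc n)^4 + W^4) * (real (Suc n)^2 + Z^2) powr \<sigma>)"

definition msum_scale :: "real \<Rightarrow> real \<Rightarrow> real \<Rightarrow> real" where
  "msum_scale \<sigma> W Z = Z powr (-2*\<sigma>) * W powr (-4) + W powr (-5 - 2*\<sigma>)"

lemma msum_term_nonneg: "0 \<le> W \<Longrightarrow> 0 \<le> msum_term \<sigma> W Z n"
  unfolding msum_term_def by auto

lemma power2_powr: "0 < (x::real) \<Longrightarrow> (x^2) powr a = x powr (2*a)"
  by (simp add: powr_powr[symmetric] powr_realpow[of x 2, simplified])

lemma msum_term_le_of_nonneg: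
  fixes \<sigma> W Z :: real
  assumes \<sigma>: "0 \<le> \<sigma>" and Z: "0 < Z" and W: "0 < W"
  shows "msum_term \<sigma> W Z n \<le> Z powr (-2*\<sigma>) * W powr (-4) * real (Suc n) powr (-2)"
proof -
  define k where "k = real (Suc n)"
  have k: "1 \<le> k" by (simp add: k_def)
  have "(Z^2) powr \<sigma> \<le> (k^2 + Z^2) powr \<sigma>" by (rule powr_mono2) (use \<sigma> in auto)
  hence "k^2 * W^4 * (Z^2) powr \<sigma> \<le> k^2 * (k^4 + W^4) * (k^2 + Z^2) powr \<sigma>"
    using k W by (intro mult_mono) auto
  moreover have "0 < k^2 * W^4 * (Z^2) powr \<sigma>" using k W Z by auto
  ultimately have "1 / (k^2 * (k^4 + W^4) * (k^2 + Z^2) powr \<sigma>) \<le> 1 / (k^2 * W^4 * (Z^2) powr \<sigma>)"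
    by (intro divide_left_mono) auto
  also have "\<dots> = Z powr (-2*\<sigma>) * W powr (-4) * k powr (-2)"
    using k W Z by (simp add: power2_powr powr_minus field_simps)
  finally show ?thesis by (simp add: msum_term_def k_def)
qed

lemma msum_term_le_of_neg:
  fixes \<sigma> W Z :: real
  assumes \<sigma>: "\<sigma> < 0" and Z: "0 < Z" and W: "0 < W"
  shows "msum_term \<sigma> W Z n
     \<le> 2 powr (-\<sigma>) * (Z powr (-2*\<sigma>) * W powr (-4) * real (Suc n) powr (-2))
       + 2 powr (-\<sigma>) * (real (Suc n) powr (-2*\<sigma> - 2) / (real (Suc n)^4 + W^4))"
proof -
  define k where "k = real (Suc n)"
  define t where "t = -\<sigma>"
  have k: "1 \<le> k" and t: "0 < t" using \<sigma> by (simp_all add: k_def t_def)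
  have "(k^2 + Z^2) powr t \<le> (2 * max (k^2) (Z^2)) powr t"
    by (rule powr_mono2) (use t in auto)
  also have "\<dots> = 2 powr t * max (k^2) (Z^2) powr t" by (simp add: powr_mult)
  also have "max (k^2) (Z^2) powr t \<le> k powr (2*t) + Z powr (2*t)"
    using k Z by (cases "k^2 \<le> Z^2") (auto simp: max_def power2_powr)
  finally have "(k^2 + Z^2) powr t \<le> 2 powr t * (Z powr (2*t) + k powr (2*t))"
    by (simp add: add.commute)
  hence "(k^2 + Z^2) powr t / (k^2 * (k^4 + W^4))
      \<le> 2 powr t * (Z powr (2*t) / (k^2 * (k^4 + W^4))) + 2 powr t * (k powr (2*t) / k^2 / (k^4 + W^4))"
    using k W by (simp add: divide_right_mono add_divide_distrib[symmetric] field_simps)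
  also have "Z powr (2*t) / (k^2 * (k^4 + W^4)) \<le> Z powr (2*t) / (k^2 * W^4)"
    by (rule divide_left_mono) (use k W in \<open>auto intro!: mult_pos_pos add_pos_pos\<close>)
  also have "Z powr (2*t) / (k^2 * W^4) = Z powr (-2*\<sigma>) * W powr (-4) * k powr (-2)"
    using k W by (simp add: t_def powr_minus field_simps)
  also have "k powr (2*t) / k^2 = k powr (-2*\<sigma> - 2)"
    using k by (simp add: t_def powr_diff)
  also have "(k^2 + Z^2) powr t / (k^2 * (k^4 + W^4)) = msum_term \<sigma> W Z n"
    using k Z by (simp add: msum_term_def k_def t_def powr_minus field_simps)
  finally show ?thesis by (simp add: t_def k_def mult_left_mono)
qed

lemma suminf_le_lincomb:
  fixes f g h :: "nat \<Rightarrow> real" and x y :: real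
  assumes f: "\<And>n. 0 \<le> f n" "\<And>n. f n \<le> x * g n + y * h n"
    and g: "summable g" and h: "summable h"
  shows "summable f" and "suminf f \<le> x * suminf g + y * suminf h"
proof -
  have sum: "summable (\<lambda>n. x * g n + y * h n)" using g h by (intro summable_add summable_mult)
  show "summable f" using f by (intro summable_comparison_test'[OF sum]) auto
  hence "suminf f \<le> (\<Sum>n. x * g n + y * h n)" by (rule suminf_le[OF f(2) _ sum])
  also have "\<dots> = x * suminf g + y * suminf h"
    using g h by (simp add: suminf_add[symmetric] suminf_mult summable_mult)
  finally show "suminf f \<le> x * suminf g + y * suminf h" .
qed

lemma powr_neg_four_le_msum_scale:
  fixes \<sigma> W Z :: real
  assumes "\<sigma> \<le> 0" and "1 \<le> Z"
  shows "W powr (-4) \<le> msum_scale \<sigma> W Z"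
proof -
  have "W powr (-4) \<le> Z powr (-2*\<sigma>) * W powr (-4)"
    using assms ge_one_powr_ge_zero[of Z "-2*\<sigma>"] by (simp add: mult_le_cancel_right1)
  thus ?thesis unfolding msum_scale_def by (simp add: add_increasing2)
qed

lemma suminf_powr_div_quartic_le_msum_scale:
  fixes \<sigma> :: real
  assumes \<sigma>: "-5/2 < \<sigma>" "\<sigma> < 0" "\<sigma> \<noteq> -1/2"
  obtains D where "D > 0"
    "\<And>W Z. 2 \<le> Z \<Longrightarrow> Z \<le> W \<Longrightarrow>
      (\<Sum>n. real (Suc n) powr (-2*\<sigma> - 2) / (real (Suc n)^4 + W^4)) \<le> D * msum_scale \<sigma> W Z"
proof (cases "-2*\<sigma> - 2 < -1")
  case True
  define K where "K = (\<Sum>n. real (Suc n) powr (-2*\<sigma> - 2))"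
  have K: "0 < K" unfolding K_def by (intro suminf_pos summable_Suc_powr True) auto
  show ?thesis
  proof (rule that[OF K])
    fix W Z :: real assume "2 \<le> Z" "Z \<le> W"
    hence "W powr (-4) * K \<le> msum_scale \<sigma> W Z * K"
      using K \<sigma> powr_neg_four_le_msum_scale[of \<sigma> Z W] by (intro mult_right_mono) auto
    thus "(\<Sum>n. real (Suc n) powr (-2*\<sigma> - 2) / (real (Suc n)^4 + W^4)) \<le> K * msum_scale \<sigma> W Z"
      using suminf_powr_div_quartic_le_summable[OF True, of W] \<open>2 \<le> Z\<close> \<open>Z \<le> W\<close>
      by (simp add: K_def mult.commute)
  qed
next
  case False
  hence "-1 < -2*\<sigma> - 2" using \<sigma>(3) by simp
  then obtain D where D: "D > 0"
    "\<And>W. 2 \<le> W \<Longrightarrow> (\<Sum>n. real (Suc n) powr (-2*\<sigma> - 2) / (real (Suc n)^4 + W^4))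
        \<le> D * W powr (-2*\<sigma> - 2 - 3)"
    using suminf_powr_div_quartic_le_powr[of "-2*\<sigma> - 2"] \<sigma>(1) by auto
  show ?thesis
  proof (rule that[OF D(1)])
    fix W Z :: real assume "2 \<le> Z" "Z \<le> W"
    hence "(\<Sum>n. real (Suc n) powr (-2*\<sigma> - 2) / (real (Suc n)^4 + W^4))
        \<le> D * W powr (-2*\<sigma> - 2 - 3)" by (intro D(2)) simp
    also have "-2*\<sigma> - 2 - 3 = -5 - 2*\<sigma>" by simp
    also have "D * W powr (-5 - 2*\<sigma>) \<le> D * msum_scale \<sigma> W Z"
      using D(1) by (intro mult_left_mono) (auto simp: msum_scale_def)
    finally show "(\<Sum>n. real (Suc n) powr (-2*\<sigma> - 2) / (real (Suc n)^4 + W^4))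
        \<le> D * msum_scale \<sigma> W Z" .
  qed
qed

lemma msum_upper_bound_of_nonneg:
  fixes \<sigma> W Z :: real
  assumes \<sigma>: "0 \<le> \<sigma>" and Z: "2 \<le> Z" "Z \<le> W"
  shows "summable (msum_term \<sigma> W Z)"
    and "suminf (msum_term \<sigma> W Z) \<le> (\<Sum>n. real (Suc n) powr (-2)) * msum_scale \<sigma> W Z"
proof -
  define P where "P = Z powr (-2*\<sigma>) * W powr (-4)"
  have g: "summable (\<lambda>n. real (Suc n) powr (-2))" by (rule summable_Suc_powr) simp
  have "msum_term \<sigma> W Z n \<le> P * real (Suc n) powr (-2) + 0 * real (Suc n) powr (-2)" for n
    using msum_term_le_of_nonneg[OF \<sigma>, of Z W n] Z by (simp add: P_def)
  note bound = suminf_le_lincomb[OF msum_term_nonneg this g g]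
  show "summable (msum_term \<sigma> W Z)" using bound(1) Z by simp
  have "P \<le> msum_scale \<sigma> W Z" by (simp add: P_def msum_scale_def)
  with bound(2) Z g show "suminf (msum_term \<sigma> W Z) \<le> (\<Sum>n. real (Suc n) powr (-2)) * msum_scale \<sigma> W Z"
    by (simp add: mult.commute mult_right_mono suminf_nonneg order_trans)
qed

lemma msum_upper_bound_of_neg:
  fixes \<sigma> W Z D :: real
  assumes \<sigma>: "-5/2 < \<sigma>" "\<sigma> < 0" and Z: "2 \<le> Z" "Z \<le> W"
    and D: "(\<Sum>n. real (Suc n) powr (-2*\<sigma> - 2) / (real (Suc n)^4 + W^4)) \<le> D * msum_scale \<sigma> W Z"
  shows "summable (msum_term \<sigma> W Z)"
    and "suminf (msum_term \<sigma> W Z)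
      \<le> 2 powr (-\<sigma>) * ((\<Sum>n. real (Suc n) powr (-2)) + D) * msum_scale \<sigma> W Z"
proof -
  define c where "c = 2 powr (-\<sigma>)"
  define P where "P = Z powr (-2*\<sigma>) * W powr (-4)"
  define g where "g n = real (Suc n) powr (-2)" for n
  define h where "h n = real (Suc n) powr (-2*\<sigma> - 2) / (real (Suc n)^4 + W^4)" for n
  have g: "summable g" unfolding g_def by (rule summable_Suc_powr) simp
  have h: "summable h" unfolding h_def using \<sigma> Z by (intro summable_powr_div_quartic) auto
  have "msum_term \<sigma> W Z n \<le> (c * P) * g n + c * h n" for n
    using msum_term_le_of_neg[of \<sigma> Z W n] \<sigma> Z by (simp add: P_def g_def h_def c_def)
  note bound = suminf_le_lincomb[OF msum_term_nonneg this g h]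
  show "summable (msum_term \<sigma> W Z)" using bound(1) Z by simp
  have "0 \<le> suminf g" unfolding g_def by (intro suminf_nonneg g[unfolded g_def]) simp
  moreover have "P \<le> msum_scale \<sigma> W Z" by (simp add: P_def msum_scale_def)
  ultimately have "(c * suminf g) * P \<le> (c * suminf g) * msum_scale \<sigma> W Z"
    by (intro mult_left_mono) (auto simp: c_def)
  moreover have "c * suminf h \<le> c * D * msum_scale \<sigma> W Z"
    using D by (simp add: c_def h_def[abs_def])
  ultimately have "c * P * suminf g + c * suminf h \<le> c * (suminf g + D) * msum_scale \<sigma> W Z"
    by (simp add: algebra_simps)
  thus "suminf (msum_term \<sigma> W Z)
      \<le> 2 powr (-\<sigma>) * ((\<Sum>n. real (Suc n) powr (-2)) + D) * msum_scale \<sigma> W Z"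
    using bound(2) Z by (simp add: c_def g_def[abs_def])
qed

lemma msum_upper_bound:
  fixes \<sigma> :: real
  assumes \<sigma>: "-5/2 < \<sigma>" "\<sigma> \<noteq> -1/2"
  obtains C where "C > 0"
    "\<And>W Z. 2 \<le> Z \<Longrightarrow> Z \<le> W \<Longrightarrow>
      summable (msum_term \<sigma> W Z) \<and> suminf (msum_term \<sigma> W Z) \<le> C * msum_scale \<sigma> W Z"
proof -
  define K where "K = (\<Sum>n. real (Suc n) powr (-2))"
  have K: "0 < K" unfolding K_def by (intro suminf_pos summable_Suc_powr) auto
  show ?thesis
  proof (cases "0 \<le> \<sigma>")
    case True
    show ?thesis
      by (rule that[OF K]) (use msum_upper_bound_of_nonneg[OF True] in \<open>auto simp: K_def\<close>)
  next
    case False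
    then obtain D where D: "D > 0"
      "\<And>W Z. 2 \<le> Z \<Longrightarrow> Z \<le> W \<Longrightarrow>
        (\<Sum>n. real (Suc n) powr (-2*\<sigma> - 2) / (real (Suc n)^4 + W^4)) \<le> D * msum_scale \<sigma> W Z"
      using suminf_powr_div_quartic_le_msum_scale[of \<sigma>] \<sigma> by auto
    show ?thesis
    proof (rule that[of "2 powr (-\<sigma>) * (K + D)"])
      show "0 < 2 powr (-\<sigma>) * (K + D)" using K D by simp
      fix W Z :: real assume Z: "2 \<le> Z" "Z \<le> W"
      from msum_upper_bound_of_neg[OF \<sigma>(1) _ Z D(2)[OF Z]] False
      show "summable (msum_term \<sigma> W Z)
          \<and> suminf (msum_term \<sigma> W Z) \<le> 2 powr (-\<sigma>) * (K + D) * msum_scale \<sigma> W Z"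
        by (simp add: K_def)
    qed
  qed
qed

lemma powr_le_of_between:
  fixes x y M \<sigma> :: real
  assumes "0 < x" "x \<le> y" "y \<le> M * x" "1 \<le> M"
  shows "y powr \<sigma> \<le> M powr \<bar>\<sigma>\<bar> * x powr \<sigma>"
proof (cases "0 \<le> \<sigma>")
  case True
  have "y powr \<sigma> \<le> (M * x) powr \<sigma>" by (rule powr_mono2) (use assms True in auto)
  also have "\<dots> = M powr \<bar>\<sigma>\<bar> * x powr \<sigma>" using True by (simp add: powr_mult)
  finally show ?thesis .
next
  case False
  have "y powr \<sigma> \<le> x powr \<sigma>" by (rule powr_mono2') (use assms False in auto)
  also have "\<dots> \<le> M powr \<bar>\<sigma>\<bar> * x powr \<sigma>"
    using ge_one_powr_ge_zero[of M "\<bar>\<sigma>\<bar>"] assms by (simp add: mult_le_cancel_right1)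
  finally show ?thesis .
qed

lemma msum_term_first_ge:
  fixes \<sigma> W Z :: real
  assumes Z: "1 \<le> Z" and ZW: "Z \<le> W"
  shows "Z powr (-2*\<sigma>) * W powr (-4) / (2 * 2 powr \<bar>\<sigma>\<bar>) \<le> msum_term \<sigma> W Z 0"
proof -
  have W: "0 < W" "0 < Z" using Z ZW by auto
  have "(1 + Z^2) powr \<sigma> \<le> 2 powr \<bar>\<sigma>\<bar> * (Z^2) powr \<sigma>"
    using Z one_le_power[of Z 2] by (intro powr_le_of_between) auto
  moreover have "1 + W^4 \<le> 2 * W^4" using Z ZW one_le_power[of W 4] by simp
  ultimately have "(1 + W^4) * (1 + Z^2) powr \<sigma> \<le> (2 * W^4) * (2 powr \<bar>\<sigma>\<bar> * (Z^2) powr \<sigma>)"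
    by (intro mult_mono) auto
  moreover have "0 < 1 + Z^2" by (simp add: add_pos_nonneg)
  hence "0 < (1 + W^4) * (1 + Z^2) powr \<sigma>" using W by (auto intro!: mult_pos_pos add_pos_pos)
  ultimately have "1 / ((2 * W^4) * (2 powr \<bar>\<sigma>\<bar> * (Z^2) powr \<sigma>)) \<le> 1 / ((1 + W^4) * (1 + Z^2) powr \<sigma>)"
    by (intro frac_le) auto
  moreover have "1 / ((2 * W^4) * (2 powr \<bar>\<sigma>\<bar> * (Z^2) powr \<sigma>))
      = Z powr (-2*\<sigma>) * W powr (-4) / (2 * 2 powr \<bar>\<sigma>\<bar>)"
    using W by (simp add: power2_powr powr_minus field_simps)
  ultimately show ?thesis by (simp add: msum_term_def)
qed

lemma msum_term_ge_of_index_near: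
  fixes \<sigma> W Z :: real
  assumes Z: "0 < Z" "Z \<le> W" and k: "W \<le> real (Suc n)" "real (Suc n) \<le> 3 * W"
  shows "W powr (-6 - 2*\<sigma>) / (738 * 10 powr \<bar>\<sigma>\<bar>) \<le> msum_term \<sigma> W Z n"
proof -
  define k where "k = real (Suc n)"
  have W: "0 < W" and kW: "W \<le> k" "k \<le> 3 * W" using Z k by (auto simp: k_def)
  have "k^2 \<le> (3*W)^2" "k^4 \<le> (3*W)^4" using kW W by (intro power_mono; simp)+
  hence k2: "k^2 \<le> 9 * W^2" and k4: "k^4 + W^4 \<le> 82 * W^4" by simp_all
  have "Z^2 \<le> W^2" "W^2 \<le> k^2" using Z kW W by (intro power_mono; simp)+
  hence "W^2 \<le> k^2 + Z^2" "k^2 + Z^2 \<le> 10 * W^2" using k2 zero_le_power2[of Z] by linarith+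
  hence "(k^2 + Z^2) powr \<sigma> \<le> 10 powr \<bar>\<sigma>\<bar> * (W^2) powr \<sigma>"
    using W by (intro powr_le_of_between) auto
  hence "k^2 * (k^4 + W^4) * (k^2 + Z^2) powr \<sigma> \<le> (9 * W^2) * (82 * W^4) * (10 powr \<bar>\<sigma>\<bar> * (W^2) powr \<sigma>)"
    using k2 k4 by (intro mult_mono) auto
  moreover have "0 < k^2 * (k^4 + W^4) * (k^2 + Z^2) powr \<sigma>"
    using W kW by (auto intro!: mult_pos_pos add_pos_pos)
  ultimately have "1 / ((9 * W^2) * (82 * W^4) * (10 powr \<bar>\<sigma>\<bar> * (W^2) powr \<sigma>))
      \<le> 1 / (k^2 * (k^4 + W^4) * (k^2 + Z^2) powr \<sigma>)"
    by (intro frac_le) auto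
  moreover have "1 / ((9 * W^2) * (82 * W^4) * (10 powr \<bar>\<sigma>\<bar> * (W^2) powr \<sigma>))
      = W powr (-6 - 2*\<sigma>) / (738 * 10 powr \<bar>\<sigma>\<bar>)"
    using W by (simp add: power2_powr powr_minus powr_diff field_simps)
  ultimately show ?thesis by (simp add: msum_term_def k_def)
qed

lemma msum_block_ge:
  fixes \<sigma> W Z :: real
  assumes Z: "0 < Z" "Z \<le> W" and W: "2 \<le> W" and sum: "summable (msum_term \<sigma> W Z)"
  shows "W powr (-5 - 2*\<sigma>) / (738 * 10 powr \<bar>\<sigma>\<bar>) \<le> suminf (msum_term \<sigma> W Z)"
proof -
  define N where "N = nat \<lceil>W\<rceil>"
  define c where "c = W powr (-6 - 2*\<sigma>) / (738 * 10 powr \<bar>\<sigma>\<bar>)"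
  have N: "W \<le> real N" "real N \<le> W + 1" using W by (simp_all add: N_def)
  have "W powr (-5 - 2*\<sigma>) / (738 * 10 powr \<bar>\<sigma>\<bar>) = W * c"
    using W by (simp add: c_def powr_diff powr_minus field_simps power_eq_if)
  also have "\<dots> \<le> real N * c" using N by (intro mult_right_mono) (auto simp: c_def)
  also have "\<dots> = (\<Sum>n\<in>{N..<2*N}. c)" by simp
  also have "\<dots> \<le> (\<Sum>n\<in>{N..<2*N}. msum_term \<sigma> W Z n)"
    using N W Z unfolding c_def by (intro sum_mono msum_term_ge_of_index_near) auto
  also have "\<dots> \<le> suminf (msum_term \<sigma> W Z)"
    using W by (intro sum_le_suminf[OF sum] msum_term_nonneg) auto
  finally show ?thesis .
qed

lemma msum_lower_bound:
  fixes \<sigma> W Z :: real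
  assumes Z: "2 \<le> Z" "Z \<le> W" and sum: "summable (msum_term \<sigma> W Z)"
  shows "msum_scale \<sigma> W Z / (1476 * 10 powr \<bar>\<sigma>\<bar>) \<le> suminf (msum_term \<sigma> W Z)"
proof -
  define S where "S = suminf (msum_term \<sigma> W Z)"
  have "2 * 2 powr \<bar>\<sigma>\<bar> \<le> 738 * 10 powr \<bar>\<sigma>\<bar>"
    using powr_mono2[of "\<bar>\<sigma>\<bar>" 2 10] powr_ge_zero[of 10 "\<bar>\<sigma>\<bar>"] by linarith
  hence "Z powr (-2*\<sigma>) * W powr (-4) / (738 * 10 powr \<bar>\<sigma>\<bar>)
      \<le> Z powr (-2*\<sigma>) * W powr (-4) / (2 * 2 powr \<bar>\<sigma>\<bar>)"
    by (intro divide_left_mono) auto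
  also have "\<dots> \<le> msum_term \<sigma> W Z 0" using Z by (intro msum_term_first_ge) auto
  also have "\<dots> \<le> S"
    unfolding S_def using Z sum_le_suminf[OF sum, of "{0}"] msum_term_nonneg[of W] by auto
  finally have P: "Z powr (-2*\<sigma>) * W powr (-4) / (738 * 10 powr \<bar>\<sigma>\<bar>) \<le> S" .
  have Q: "W powr (-5 - 2*\<sigma>) / (738 * 10 powr \<bar>\<sigma>\<bar>) \<le> S"
    unfolding S_def using Z by (intro msum_block_ge sum) auto
  from P Q show ?thesis by (simp add: S_def msum_scale_def field_simps)
qed

lemma powr_le_powr_iff_base:
  fixes x y e :: real
  assumes "0 \<le> x" "0 \<le> y" "0 < e"
  shows "x powr e \<le> y powr e \<longleftrightarrow> x \<le> y"
  using assms powr_mono2[of e x y] powr_less_mono2[of e y x] by (auto simp: not_le[symmetric])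

lemma msum_scale_eq_sum_squares:
  fixes \<sigma> W Z :: real
  assumes "0 < W"
  shows "msum_scale \<sigma> W Z = (Z powr (-\<sigma>) / W^2)^2 + (W powr (-\<sigma>) / W powr (5/2))^2"
proof -
  have "(Z powr (-\<sigma>))^2 = Z powr (-2*\<sigma>)"
    by (simp add: power2_eq_square powr_add[symmetric])
  hence "(Z powr (-\<sigma>) / W^2)^2 = Z powr (-2*\<sigma>) / W^4"
    by (simp add: power_divide flip: power_mult)
  also have "\<dots> = Z powr (-2*\<sigma>) * W powr (-4)"
    using assms by (simp add: powr_minus powr_numeral divide_inverse)
  finally have "(Z powr (-\<sigma>) / W^2)^2 = Z powr (-2*\<sigma>) * W powr (-4)" .
  moreover have "(W powr (-\<sigma>) / W powr (5/2))^2 = W powr (-5 - 2*\<sigma>)"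
  proof -
    have "(W powr (-\<sigma>) / W powr (5/2))^2 = W powr (-\<sigma> - 5/2) * W powr (-\<sigma> - 5/2)"
      using assms by (simp add: powr_diff power2_eq_square)
    also have "\<dots> = W powr ((-\<sigma> - 5/2) + (-\<sigma> - 5/2))" by (rule powr_add[symmetric])
    also have "(-\<sigma> - 5/2) + (-\<sigma> - 5/2) = -5 - 2*\<sigma>" by simp
    finally show ?thesis .
  qed
  ultimately show ?thesis by (simp add: msum_scale_def)
qed

lemma powr_div_powr_five_halves:
  fixes W \<sigma> :: real
  assumes "0 < W"
  shows "W powr (-\<sigma>) / W powr (5/2) = W powr (-\<sigma> - 1/2) / W^2"
proof -
  have "W powr (-\<sigma>) / W powr (5/2) = W powr (-\<sigma> - 5/2)" by (rule powr_diff[symmetric])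
  also have "-\<sigma> - 5/2 = (-\<sigma> - 1/2) - 2" by simp
  also have "W powr ((-\<sigma> - 1/2) - 2) = W powr (-\<sigma> - 1/2) / W^2"
    using assms by (simp only: powr_diff powr_numeral less_imp_le)
  finally show ?thesis .
qed

lemma msum_scale_comparable_first:
  fixes \<sigma> W Z :: real
  assumes \<sigma>: "-1/2 < \<sigma>" and Z: "1 \<le> Z" "Z \<le> W"
  shows "(Z powr (-\<sigma>) / W^2)^2 \<le> msum_scale \<sigma> W Z"
    and "msum_scale \<sigma> W Z \<le> 2 * (Z powr (-\<sigma>) / W^2)^2"
proof -
  have W: "0 < W" using Z by simp
  have "W powr (-\<sigma> - 1/2) \<le> Z powr (-\<sigma>)"
  proof (cases "0 \<le> \<sigma>")
    case True
    have "W powr (-\<sigma> - 1/2) \<le> W powr (-\<sigma>)" using Z by (intro powr_mono) auto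
    also have "\<dots> \<le> Z powr (-\<sigma>)" using Z True by (intro powr_mono2') auto
    finally show ?thesis .
  next
    case False
    have "W powr (-\<sigma> - 1/2) \<le> 1" using Z \<sigma> powr_mono[of "-\<sigma> - 1/2" 0 W] by auto
    also have "1 \<le> Z powr (-\<sigma>)" using Z False by (intro ge_one_powr_ge_zero) auto
    finally show ?thesis .
  qed
  hence "W powr (-\<sigma> - 1/2) / W^2 \<le> Z powr (-\<sigma>) / W^2" using W by (simp add: divide_right_mono)
  moreover have "W powr (-\<sigma>) / W powr (5/2) = W powr (-\<sigma> - 1/2) / W^2"
    using W by (rule powr_div_powr_five_halves)
  ultimately have "(W powr (-\<sigma>) / W powr (5/2))^2 \<le> (Z powr (-\<sigma>) / W^2)^2"
    by (intro power_mono) auto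
  thus "(Z powr (-\<sigma>) / W^2)^2 \<le> msum_scale \<sigma> W Z"
    and "msum_scale \<sigma> W Z \<le> 2 * (Z powr (-\<sigma>) / W^2)^2"
    using msum_scale_eq_sum_squares[OF W, of \<sigma> Z] by simp_all
qed

text \<open>For \<open>\<sigma> < 0\<close> the two summands of \<open>msum_scale\<close> are the squares of the two terms
  of the bracket, and the second dominates exactly when \<open>Z \<le> W\<^sup>\<kappa>\<close>, since
  \<open>(W\<^sup>\<kappa>)\<^sup>-\<^sup>\<sigma> = W\<^sup>-\<^sup>\<sigma>\<^sup>-\<^sup>1\<^sup>/\<^sup>2\<close>.\<close>

lemma msum_scale_comparable_threshold:
  fixes \<sigma> W Z :: real
  defines "\<kappa> \<equiv> (2*\<sigma> + 1) / (2*\<sigma>)"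
    and "b1 \<equiv> Z powr (-\<sigma>) / W^2" and "b2 \<equiv> W powr (-\<sigma>) / W powr (5/2)"
  defines "B \<equiv> b1 * (if W powr \<kappa> \<le> Z then 1 else 0) + b2 * (if Z \<le> W powr \<kappa> then 1 else 0)"
  assumes \<sigma>: "\<sigma> < 0" and Z: "0 < Z" and W: "0 < W"
  shows "B^2 / 2 \<le> msum_scale \<sigma> W Z" and "msum_scale \<sigma> W Z \<le> 2 * B^2"
proof -
  have scale: "msum_scale \<sigma> W Z = b1^2 + b2^2"
    unfolding b1_def b2_def by (rule msum_scale_eq_sum_squares[OF W])
  have b: "0 \<le> b1" "0 \<le> b2" by (simp_all add: b1_def b2_def)
  have "\<kappa> * (-\<sigma>) = -\<sigma> - 1/2"
    using \<sigma> by (simp add: \<kappa>_def field_simps)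
  hence "(W powr \<kappa>) powr (-\<sigma>) = W powr (-\<sigma> - 1/2)"
    by (simp only: powr_powr)
  hence b2_eq: "b2 = (W powr \<kappa>) powr (-\<sigma>) / W^2"
    unfolding b2_def using W by (simp add: powr_div_powr_five_halves)
  have dominant: "b2 \<le> b1 \<longleftrightarrow> W powr \<kappa> \<le> Z" "b1 \<le> b2 \<longleftrightarrow> Z \<le> W powr \<kappa>"
    unfolding b2_eq b1_def using W Z \<sigma> by (simp_all add: divide_le_cancel powr_le_powr_iff_base)
  have "B^2 / 2 \<le> b1^2 + b2^2 \<and> b1^2 + b2^2 \<le> 2 * B^2"
  proof (cases rule: linorder_cases[of "W powr \<kappa>" Z])
    case less
    hence "B = b1" "b2^2 \<le> b1^2" using dominant b by (auto simp: B_def intro: power_mono)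
    thus ?thesis by simp
  next
    case equal
    hence "B = 2 * b1" "b2 = b1" using dominant b by (auto simp: B_def)
    thus ?thesis by (simp add: power2_eq_square)
  next
    case greater
    hence "B = b2" "b1^2 \<le> b2^2" using dominant b by (auto simp: B_def intro: power_mono)
    thus ?thesis by simp
  qed
  thus "B^2 / 2 \<le> msum_scale \<sigma> W Z" and "msum_scale \<sigma> W Z \<le> 2 * B^2"
    unfolding scale by simp_all
qed

lemma jzeta_ge_two:
  assumes "\<zeta> \<noteq> (0, 0)"
  shows "2 \<le> jzeta \<zeta>"
proof -
  obtain m n where \<zeta>: "\<zeta> = (m, n)" by (cases \<zeta>)
  have "1 \<le> m^2 + n^2" using assms \<zeta> sum_power2_gt_zero_iff[of m n] by auto
  hence "1 \<le> real_of_int (m^2 + n^2)" by linarith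
  hence "1 \<le> sqrt (real_of_int m ^ 2 + real_of_int n ^ 2)" by simp
  thus ?thesis by (simp add: jzeta_def \<zeta>)
qed

lemma jzeta_le_jomega: "jzeta \<zeta> \<le> jomega l \<zeta>"
proof -
  have "jzeta \<zeta> = sqrt ((jzeta \<zeta>)^2)" by (simp add: jzeta_def)
  also have "\<dots> \<le> sqrt (cmod l + (jzeta \<zeta>)^2)" by (rule real_sqrt_le_mono) simp
  finally show ?thesis by (simp add: jomega_def)
qed

lemma Msig_eq_sqrt_suminf: "Msig \<sigma> l \<zeta> = sqrt (suminf (msum_term \<sigma> (jomega l \<zeta>) (jzeta \<zeta>)))"
  unfolding Msig_def msum_term_def ..

lemma sqrt_le_of_square_bounds:
  fixes b c C S :: real
  assumes "0 \<le> b" "0 \<le> c" "0 \<le> C" "c * b^2 \<le> S" "S \<le> C * b^2"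
  shows "sqrt c * b \<le> sqrt S" and "sqrt S \<le> sqrt C * b"
proof -
  have "sqrt (c * b^2) = sqrt c * b" "sqrt (C * b^2) = sqrt C * b"
    using assms(1) by (simp_all add: real_sqrt_mult)
  thus "sqrt c * b \<le> sqrt S" and "sqrt S \<le> sqrt C * b"
    using assms(4,5) real_sqrt_le_mono by metis+
qed

lemma comparable_on_Msig:
  fixes \<sigma> a A :: real and B :: "real \<Rightarrow> real \<Rightarrow> real" and S :: "complex set"
  assumes \<sigma>: "-5/2 < \<sigma>" "\<sigma> \<noteq> -1/2" and aA: "0 < a" "0 < A"
    and B: "\<And>W Z. 2 \<le> Z \<Longrightarrow> Z \<le> W \<Longrightarrow>
      0 \<le> B W Z \<and> a * (B W Z)^2 \<le> msum_scale \<sigma> W Z \<and> msum_scale \<sigma> W Z \<le> A * (B W Z)^2"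
  shows "comparable_on S (Msig \<sigma>) (\<lambda>l \<zeta>. B (jomega l \<zeta>) (jzeta \<zeta>))"
proof -
  obtain C where C: "C > 0" "\<And>W Z. 2 \<le> Z \<Longrightarrow> Z \<le> W \<Longrightarrow>
      summable (msum_term \<sigma> W Z) \<and> suminf (msum_term \<sigma> W Z) \<le> C * msum_scale \<sigma> W Z"
    by (rule msum_upper_bound[OF \<sigma>]) (rule that)
  define c where "c = 1 / (1476 * 10 powr \<bar>\<sigma>\<bar>)"
  have c: "0 < c" by (simp add: c_def)
  have bounds: "sqrt (c * a) * B W Z \<le> sqrt (suminf (msum_term \<sigma> W Z))
      \<and> sqrt (suminf (msum_term \<sigma> W Z)) \<le> sqrt (C * A) * B W Z"
    if Z: "2 \<le> Z" "Z \<le> W" for W Z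
  proof -
    note B = B[OF Z] and C = C(2)[OF Z]
    have "c * a * (B W Z)^2 \<le> c * msum_scale \<sigma> W Z"
      using B c by (simp only: mult.assoc mult_le_cancel_left_pos)
    also have "\<dots> \<le> suminf (msum_term \<sigma> W Z)"
      using msum_lower_bound[OF Z] C unfolding c_def by simp
    finally have "c * a * (B W Z)^2 \<le> suminf (msum_term \<sigma> W Z)" .
    moreover have "C * msum_scale \<sigma> W Z \<le> C * (A * (B W Z)^2)"
      using B \<open>C > 0\<close> by (intro mult_left_mono) auto
    hence "suminf (msum_term \<sigma> W Z) \<le> C * A * (B W Z)^2"
      using C by (simp add: mult.assoc)
    ultimately show ?thesis using B c aA \<open>C > 0\<close> by (intro conjI sqrt_le_of_square_bounds) auto
  qed
  show ?thesis
    unfolding comparable_on_def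
  proof (rule exI[of _ "sqrt (c * a)"], rule exI[of _ "sqrt (C * A)"], intro conjI ballI allI impI)
    show "0 < sqrt (c * a)" "0 < sqrt (C * A)" using c aA \<open>C > 0\<close> by simp_all
    fix l :: complex and \<zeta> :: "int \<times> int" assume "\<zeta> \<noteq> (0, 0)"
    hence "2 \<le> jzeta \<zeta>" "jzeta \<zeta> \<le> jomega l \<zeta>" by (simp_all add: jzeta_ge_two jzeta_le_jomega)
    from bounds[OF this]
    show "sqrt (c * a) * B (jomega l \<zeta>) (jzeta \<zeta>) \<le> Msig \<sigma> l \<zeta>"
      and "Msig \<sigma> l \<zeta> \<le> sqrt (C * A) * B (jomega l \<zeta>) (jzeta \<zeta>)"
      by (simp_all only: Msig_eq_sqrt_suminf)
  qed
qed

theorem lemma9: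
  fixes a \<nu> \<delta>1 \<delta>2 \<sigma> :: real and VP :: "complex set"
  assumes "a > 0" and "\<nu> > 0"
    and "\<delta>1 > 0" and "sectorS \<delta>1 \<delta>2 \<inter> VP = {}"
    and "\<delta>2 < min (\<nu> * pi^2 / (2 * a^2)) (\<nu> / 2)"
    and "-5/2 < \<sigma>" and "\<sigma> < 3/2" and "\<sigma> \<noteq> -1/2"
  shows "(\<sigma> > -1/2 \<longrightarrow>
            comparable_on (sectorS \<delta>1 \<delta>2) (Msig \<sigma>)
              (\<lambda>l \<zeta>. jzeta \<zeta> powr (-\<sigma>) / (jomega l \<zeta>)^2))
       \<and> (\<sigma> < -1/2 \<longrightarrow>
            (let \<kappa> = (2*\<sigma> + 1) / (2*\<sigma>) in
             comparable_on (sectorS \<delta>1 \<delta>2) (Msig \<sigma>)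
              (\<lambda>l \<zeta>. jzeta \<zeta> powr (-\<sigma>) / (jomega l \<zeta>)^2
                        * (if jzeta \<zeta> \<ge> jomega l \<zeta> powr \<kappa> then 1 else 0)
                     + jomega l \<zeta> powr (-\<sigma>) / jomega l \<zeta> powr (5/2)
                        * (if jzeta \<zeta> \<le> jomega l \<zeta> powr \<kappa> then 1 else 0))))"
proof (intro conjI impI)
  assume "\<sigma> > -1/2"
  show "comparable_on (sectorS \<delta>1 \<delta>2) (Msig \<sigma>) (\<lambda>l \<zeta>. jzeta \<zeta> powr (-\<sigma>) / (jomega l \<zeta>)^2)"
    by (rule comparable_on_Msig[where a = 1 and A = 2 and B = "\<lambda>W Z. Z powr (-\<sigma>) / W^2"])
      (use assms(6,8) msum_scale_comparable_first[OF \<open>\<sigma> > -1/2\<close>] in auto)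
next
  assume "\<sigma> < -1/2"
  show "let \<kappa> = (2*\<sigma> + 1) / (2*\<sigma>) in
    comparable_on (sectorS \<delta>1 \<delta>2) (Msig \<sigma>)
      (\<lambda>l \<zeta>. jzeta \<zeta> powr (-\<sigma>) / (jomega l \<zeta>)^2
                * (if jzeta \<zeta> \<ge> jomega l \<zeta> powr \<kappa> then 1 else 0)
             + jomega l \<zeta> powr (-\<sigma>) / jomega l \<zeta> powr (5/2)
                * (if jzeta \<zeta> \<le> jomega l \<zeta> powr \<kappa> then 1 else 0))"
    unfolding Let_def
    by (rule comparable_on_Msig[where a = "1/2" and A = 2 and B = "\<lambda>W Z.
          Z powr (-\<sigma>) / W^2 * (if W powr ((2*\<sigma> + 1) / (2*\<sigma>)) \<le> Z then 1 else 0)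
          + W powr (-\<sigma>) / W powr (5/2) * (if Z \<le> W powr ((2*\<sigma> + 1) / (2*\<sigma>)) then 1 else 0)"])
      (use assms(6,8) \<open>\<sigma> < -1/2\<close> msum_scale_comparable_threshold[of \<sigma>] in auto)
qed

end
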